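(* Let $p$ be an odd prime and $k,m$ positive integers, and let $n$ be a positive integer dividing $p^{km}+1$ with $\frac{p^{km}+1}{n}$ odd. Let $\mathbb{F}_p(\eta)$ be an extension of $\mathbb{F}_p$ of degree $k$, and let $\sigma$ be its Frobenius automorphism. Let $g(X)$ and $h(X,\eta)$ be coprime factors of $X^n+1$ such that: (1) $g(X)$ is a factor of $X^n+1$ over $\mathbb{F}_p$ with $g(-X)=g(X)$, and $g$ is divisible by every irreducible factor of $X^n+1$ over $\mathbb{F}_p$ whose degree is not divisible by $k$; (2) $h(X,\eta)$ is a factor of $\frac{X^n+1}{g}$ over $\mathbb{F}_p(\eta)$ with $h(-X,\eta)=h(X,\eta)$, such that for every irreducible factor $r(X,\eta)$ of $\frac{X^n+1}{g}$ over $\mathbb{F}_p(\eta)$, $r$ divides $h$ if and only if none of $\sigma^i(r)$, $i=1,\dots,k-1$, divides $h$; i.e. $\frac{X^n+1}{g}=\prod_{i=0}^{k-1}\sigma^i(h)$. Choose any nonzero $\alpha\in\mathbb{F}_p$, and let $a(X,\eta)$ be the polynomial modulo $X^n+1$ uniquely determined by the Chinese remainder theorem via $$a\equiv 1\mod g,\qquad a\equiv\sigma^i(\alpha\eta)\mod \sigma^i(h)\quad\text{for all }0\le i<k.$$ Then $a(X,\eta)$ lies in $\mathbb{F}_p[X]$ (modulo $X^n+1$), and the uniquely negacyclic subspace $S=\{(ug,\,uag): u\in\mathcal{R}\}$ of $\mathcal{R}\times\mathcal{R}\cong\mathbb{F}_p^n\times\mathbb{F}_p^n$ generated by $(g,ag)$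 is totally isotropic.
   Context: $\mathcal{R}=\mathbb{F}_p[X]/\langle X^n+1\rangle$, identified with $\mathbb{F}_p^n$ via $(a_0,\dots,a_{n-1})\mapsto\sum a_iX^i$. $\sigma$ is the Frobenius automorphism $\beta\mapsto\beta^p$ of $\mathbb{F}_p(\eta)$, extended coefficientwise to polynomials. The symplectic inner product on $\mathbb{F}_p^n\times\mathbb{F}_p^n$ is $\langle(\mathbf{a},\mathbf{b}),(\mathbf{c},\mathbf{d})\rangle_s=\mathbf{a}^T\mathbf{d}-\mathbf{b}^T\mathbf{c}$, and a subset is totally isotropic if this vanishes for all pairs of its elements. *)

theory Defs
  imports "HOL-Computational_Algebra.Computational_Algebra" "HOL-Library.Cardinality"
begin

text \<open>The prime field F_p, viewed inside a field 'a of characteristic p.\<close>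
definition Fp :: "'a::field set" where
  "Fp = range of_nat"

definition poly_over_Fp :: "'a::field poly \<Rightarrow> bool" where
  "poly_over_Fp q \<longleftrightarrow> (\<forall>i. coeff q i \<in> Fp)"

definition Fp_adjoin :: "'a::field \<Rightarrow> 'a set" where
  "Fp_adjoin eta = {poly q eta | q. poly_over_Fp q}"

definition irreducible_over_Fp :: "'a::field poly \<Rightarrow> bool" where
  "irreducible_over_Fp q \<longleftrightarrow> poly_over_Fp q \<and> degree q > 0 \<and>
     (\<forall>r s. poly_over_Fp r \<and> poly_over_Fp s \<and> q = r * s \<longrightarrow> degree r = 0 \<or> degree s = 0)"

definition Xn1 :: "nat \<Rightarrow> 'a::field poly" where
  "Xn1 n = monom 1 n + 1"

definition frob :: "nat \<Rightarrow> nat \<Rightarrow> 'a::field poly \<Rightarrow> 'a poly" where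
  "frob p i r = map_poly (\<lambda>x. x ^ (p ^ i)) r"

definition neg_var :: "'a::field poly \<Rightarrow> 'a poly" where
  "neg_var q = pcompose q [:0, -1:]"

text \<open>Coefficient vector in F_p^n of an element of R = F_p[X]/(X^n+1).\<close>
definition vecR :: "nat \<Rightarrow> 'a::field poly \<Rightarrow> nat \<Rightarrow> 'a" where
  "vecR n q j = coeff (q mod Xn1 n) j"

definition symp :: "nat \<Rightarrow> ((nat \<Rightarrow> 'a::field) \<times> (nat \<Rightarrow> 'a)) \<Rightarrow> ((nat \<Rightarrow> 'a) \<times> (nat \<Rightarrow> 'a)) \<Rightarrow> 'a" where
  "symp n x y = (\<Sum>j<n. fst x j * snd y j) - (\<Sum>j<n. snd x j * fst y j)"

definition totally_isotropic :: "nat \<Rightarrow> ((nat \<Rightarrow> 'a::field) \<times> (nat \<Rightarrow> 'a)) set \<Rightarrow> bool" where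
  "totally_isotropic n S \<longleftrightarrow> (\<forall>x\<in>S. \<forall>y\<in>S. symp n x y = 0)"

definition neg_subspace :: "nat \<Rightarrow> 'a::field poly \<Rightarrow> 'a poly \<Rightarrow> ((nat \<Rightarrow> 'a) \<times> (nat \<Rightarrow> 'a)) set" where
  "neg_subspace n g a = {(vecR n (u * g), vecR n (u * a * g)) | u. poly_over_Fp u}"

end

theory Submission
  imports Defs "HOL-Number_Theory.Cong"
begin

text \<open>
  Write M = X^n + 1 and H_i = \<sigma>^i(h). Since p does not divide n, M is squarefree, and the
  hypothesis on h forces every irreducible factor of M/g to divide some H_i (if r divides
  \<sigma>^i(h) then \<sigma>^{k-i}(r) divides h). Hence M divides every polynomial divisible by g and by all
  H_i, which makes the H_i pairwise coprime, gives uniqueness of the CRT solution a, and,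
  applied to \<sigma>(a) - a, shows that a is fixed by \<sigma> modulo M, i.e. lies in F_p[X].

  For isotropy, the symplectic product of (ug, uag) and (vg, vag) is a difference of coefficient
  pairings, and multiplication by f(X) is adjoint to multiplication by f(X^{-1}), where
  X^{-1} = X^{2n-1} modulo M. So it suffices that M divides g(X) g(X^{-1}) (a(X) - a(X^{-1})).
  With Q = p^{km} we have X^{-1} = -X^Q modulo M, so f(X^{-1}) = f(-X)^Q; as g(-X) = g and
  h(-X) = h, everything reduces to a(-X)^Q = a modulo each H_i, which holds because c^Q = c
  for every c in F_{p^k}.
\<close>

section \<open>Divisibility in Euclidean rings\<close>

text \<open>
  Polynomials over an arbitrary field form a Euclidean ring, but the library provides their gcd
  and factorial-ring structure only for fields with a normalisation; the few facts needed here
  are therefore derived from the Euclidean size alone.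
\<close>

lemma diff_dvd_power_diff: "x - y dvd x ^ n - (y ^ n :: 'a::comm_ring_1)"
proof (induction n)
  case (Suc n)
  have "x ^ Suc n - y ^ Suc n = x * (x ^ n - y ^ n) + (x - y) * y ^ n"
    by (simp add: algebra_simps)
  with Suc show ?case
    by simp
qed simp

lemma bezout_imp_coprime:
  fixes a b :: "'a::algebraic_semidom"
  assumes "s * a + t * b = 1"
  shows "coprime a b"
proof (rule coprimeI)
  fix c assume "c dvd a" "c dvd b"
  then have "c dvd s * a + t * b" by simp
  with assms show "is_unit c" by simp
qed

lemma coprime_imp_bezout:
  fixes a b :: "'a::euclidean_ring"
  assumes "coprime a b"
  obtains s t where "s * a + t * b = 1"
proof -
  define I where "I = {s * a + t * b | s t. True} - {0}"
  have "a \<noteq> 0 \<or> b \<noteq> 0"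
    using assms by auto
  then have "I \<noteq> {}"
    unfolding I_def by (metis (mono_tags, lifting) Diff_iff empty_iff mem_Collect_eq singletonD
        add_0 add.right_neutral mult_1 mult_zero_left)
  then obtain d where "d \<in> I" and min: "\<And>e. e \<in> I \<Longrightarrow> euclidean_size d \<le> euclidean_size e"
    using ex_has_least_nat[of "\<lambda>e. e \<in> I" _ euclidean_size] by blast
  then obtain s0 t0 where d: "d = s0 * a + t0 * b" "d \<noteq> 0"
    unfolding I_def by blast
  have d_dvd: "d dvd s * a + t * b" for s t
  proof (rule ccontr)
    assume "\<not> d dvd s * a + t * b"
    moreover have "(s * a + t * b) mod d =
        (s - (s * a + t * b) div d * s0) * a + (t - (s * a + t * b) div d * t0) * b"
      by (simp add: d(1) minus_div_mult_eq_mod[symmetric] algebra_simps)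
    ultimately have "(s * a + t * b) mod d \<in> I"
      unfolding I_def by (auto simp: mod_eq_0_iff_dvd)
    with min mod_size_less[OF d(2)] show False
      by (meson not_le)
  qed
  have "is_unit d"
    using d_dvd[of 1 0] d_dvd[of 0 1] assms by (simp add: coprime_common_divisor)
  then obtain e where "1 = d * e"
    by (rule dvdE)
  then have "(e * s0) * a + (e * t0) * b = 1"
    by (simp add: d(1) algebra_simps)
  then show thesis ..
qed

lemma coprime_mult_left_euclidean:
  fixes a b c :: "'a::euclidean_ring"
  assumes "coprime a c" "coprime b c"
  shows "coprime (a * b) c"
proof -
  obtain s t where st: "s * a + t * c = 1"
    using coprime_imp_bezout[OF assms(1)] .
  obtain s' t' where st': "s' * b + t' * c = 1"
    using coprime_imp_bezout[OF assms(2)] .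
  have "(s * a + t * c) * (s' * b + t' * c) = 1"
    by (simp add: st st')
  then have "(s * s') * (a * b) + (t * s' * b + s * a * t' + t * t' * c) * c = 1"
    by (simp add: algebra_simps)
  then show ?thesis
    by (rule bezout_imp_coprime)
qed

lemma coprime_prod_left_euclidean:
  fixes m :: "'b \<Rightarrow> 'a::euclidean_ring"
  assumes "finite I" "\<And>i. i \<in> I \<Longrightarrow> coprime (m i) c"
  shows "coprime (\<Prod>i\<in>I. m i) c"
  using assms by (induction I rule: finite_induct) (simp_all add: coprime_mult_left_euclidean)

lemma chinese_remainder_euclidean:
  fixes m r :: "'b \<Rightarrow> 'a::euclidean_ring"
  assumes "finite I" "\<And>i j. i \<in> I \<Longrightarrow> j \<in> I \<Longrightarrow> i \<noteq> j \<Longrightarrow> coprime (m i) (m j)"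
  shows "\<exists>x. \<forall>i\<in>I. m i dvd x - r i"
  using assms
proof (induction I rule: finite_induct)
  case (insert j I)
  then obtain x where x: "\<forall>i\<in>I. m i dvd x - r i"
    by blast
  have "coprime (\<Prod>i\<in>I. m i) (m j)"
    using insert by (intro coprime_prod_left_euclidean) auto
  then obtain s t where st: "s * (\<Prod>i\<in>I. m i) + t * m j = 1"
    by (rule coprime_imp_bezout)
  define y where "y = x * (t * m j) + r j * (s * (\<Prod>i\<in>I. m i))"
  have y_x: "y - x = (r j - x) * s * (\<Prod>i\<in>I. m i)" and y_r: "y - r j = (x - r j) * t * m j"
  proof -
    have tm: "t * m j = 1 - s * (\<Prod>i\<in>I. m i)" and sm: "s * (\<Prod>i\<in>I. m i) = 1 - t * m j"
      using st by (simp_all add: eq_diff_eq add.commute)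
    show "y - x = (r j - x) * s * (\<Prod>i\<in>I. m i)"
      unfolding y_def tm by (simp add: algebra_simps)
    show "y - r j = (x - r j) * t * m j"
      unfolding y_def sm by (simp add: algebra_simps)
  qed
  have "m i dvd y - r i" if "i \<in> I" for i
  proof -
    have "m i dvd (\<Prod>i\<in>I. m i)"
      using insert(1) that by (rule dvd_prodI)
    then have "m i dvd y - x"
      unfolding y_x by (rule dvd_mult)
    then have "m i dvd (y - x) + (x - r i)"
      using x that by (blast intro: dvd_add)
    then show ?thesis
      by simp
  qed
  moreover have "m j dvd y - r j"
    unfolding y_r by (rule dvd_mult) simp
  ultimately show ?case
    by (intro exI[of _ y]) simp
qed simp

lemma dvd_mod_diff:
  fixes x :: "'a::euclidean_ring"
  assumes "m dvd M" "m dvd x - r"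
  shows "m dvd x mod M - r"
proof -
  have "m dvd (x - r) - x div M * M"
    by (rule dvd_diff[OF assms(2) dvd_mult[OF assms(1)]])
  also have "(x - r) - x div M * M = x mod M - r"
    by (simp add: minus_div_mult_eq_mod[symmetric] algebra_simps)
  finally show ?thesis .
qed

lemma irreducible_dvd_multD:
  fixes r a b :: "'a::euclidean_ring"
  assumes "irreducible r" "r dvd a * b"
  shows "r dvd a \<or> r dvd b"
proof (cases "r dvd a")
  case False
  have "coprime r a"
  proof (rule coprimeI)
    fix c assume c: "c dvd r" "c dvd a"
    from c(1) obtain e where e: "r = c * e"
      by (rule dvdE)
    with assms(1) have "is_unit c \<or> is_unit e"
      by (rule irreducibleD)
    moreover have "\<not> is_unit e"
      using e c(2) False by (auto simp: mult_unit_dvd_iff)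
    ultimately show "is_unit c"
      by blast
  qed
  then obtain s t where "s * r + t * a = 1"
    by (rule coprime_imp_bezout)
  then have "b = r * (s * b) + t * (a * b)"
    by (metis mult.assoc mult.commute mult_1 distrib_right)
  with assms(2) show ?thesis
    by (metis dvd_add dvd_mult dvd_triv_left)
qed simp

lemma irreducible_divisor_exists:
  fixes a :: "'a::euclidean_ring"
  assumes "a \<noteq> 0" "\<not> is_unit a"
  shows "\<exists>r. irreducible r \<and> r dvd a"
  using assms
proof (induction "euclidean_size a" arbitrary: a rule: less_induct)
  case less
  show ?case
  proof (cases "irreducible a")
    case False
    then obtain b c where bc: "a = b * c" "\<not> is_unit b" "\<not> is_unit c"
      using less.prems by (auto simp: irreducible_def)
    with less.prems(1) have "b \<noteq> 0" "c \<noteq> 0"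
      by auto
    then have "euclidean_size b < euclidean_size a"
      using euclidean_size_times_nonunit[of c b] bc by (simp add: mult.commute)
    then obtain r where "irreducible r" "r dvd b"
      using less.hyps \<open>b \<noteq> 0\<close> bc(2) by blast
    with bc(1) show ?thesis
      by auto
  qed auto
qed

lemma squarefree_dvdI:
  fixes d f :: "'a::euclidean_ring"
  assumes "squarefree d" "\<And>r. irreducible r \<Longrightarrow> r dvd d \<Longrightarrow> r dvd f"
  shows "d dvd f"
  using assms
proof (induction "euclidean_size d" arbitrary: d f rule: less_induct)
  case less
  show ?case
  proof (cases "is_unit d")
    case False
    have "d \<noteq> 0"
      using less.prems(1) by auto
    then obtain r where r: "irreducible r" "r dvd d"
      using irreducible_divisor_exists False by blast
    from r(2) obtain d' where d: "d = r * d'"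
      by (rule dvdE)
    obtain f' where f: "f = r * f'"
      using less.prems(2)[OF r] by (rule dvdE)
    have "d' dvd f'"
    proof (rule less.hyps)
      have "r \<noteq> 0" "d' \<noteq> 0" "\<not> is_unit r"
        using d \<open>d \<noteq> 0\<close> r(1) by (auto simp: irreducible_def)
      then show "euclidean_size d' < euclidean_size d"
        unfolding d by (rule euclidean_size_times_nonunit)
      show "squarefree d'"
        using less.prems(1) unfolding d by (rule squarefree_multD)
      fix q assume q: "irreducible q" "q dvd d'"
      then have "q dvd r * f'"
        using less.prems(2)[of q] by (simp add: d f)
      moreover have "\<not> q dvd r"
      proof
        assume "q dvd r"
        then obtain c where c: "r = q * c"
          by (rule dvdE)
        then have "is_unit c"
          using irreducibleD[OF r(1) c] q(1) by (auto simp: irreducible_def)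
        then have "r * r dvd d"
          using q(2) c unfolding d by (auto simp: mult_unit_dvd_iff)
        then have "is_unit r"
          using less.prems(1) by (auto simp: power2_eq_square dest: squarefreeD)
        with r(1) show False
          by (simp add: irreducible_def)
      qed
      ultimately show "q dvd f'"
        using irreducible_dvd_multD[OF q(1)] by blast
    qed
    then show ?thesis
      by (simp add: d f)
  qed (rule unit_imp_dvd)
qed

section \<open>The Frobenius map on polynomials\<close>

lemma CHAR_eq_prime:
  assumes "prime p" "of_nat p = (0::'a::field)"
  shows "CHAR('a) = p"
proof -
  have "CHAR('a) dvd p"
    using assms(2) by (simp add: of_nat_eq_0_iff_char_dvd)
  with assms(1) show ?thesis
    by (auto simp: prime_nat_iff)
qed

lemma coeff_frob: "p > 0 \<Longrightarrow> coeff (frob p i f) j = coeff f j ^ (p ^ i)"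
  unfolding frob_def by (simp add: coeff_map_poly)

lemma frob_0 [simp]: "frob p 0 f = f"
  by (simp add: frob_def)

lemma frob_one [simp]: "frob p i 1 = 1"
  by (simp add: frob_def)

lemma frob_frob: "p > 0 \<Longrightarrow> frob p i (frob p j f) = frob p (i + j) f"
  by (rule poly_eqI) (simp add: coeff_frob power_add mult.commute flip: power_mult)

lemma frob_const: "p > 0 \<Longrightarrow> frob p i [:c:] = [:c ^ (p ^ i):]"
  by (rule poly_eqI) (simp add: coeff_frob coeff_pCons split: nat.split)

lemma frob_add:
  assumes "prime p" "CHAR('a::field) = p"
  shows "frob p i (f + g :: 'a poly) = frob p i f + frob p i g"
  using assms by (intro poly_eqI) (simp add: coeff_frob prime_gt_0_nat freshmans_dream')

lemma frob_diff:
  assumes "prime p" "CHAR('a::field) = p"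
  shows "frob p i (f - g :: 'a poly) = frob p i f - frob p i g"
  using frob_add[OF assms, of i "f - g" g] by (simp add: eq_diff_eq)

lemma frob_mult:
  assumes "prime p" "CHAR('a::field) = p"
  shows "frob p i (f * g :: 'a poly) = frob p i f * frob p i g"
  using assms by (intro poly_eqI)
    (simp add: coeff_frob prime_gt_0_nat coeff_mult freshmans_dream_sum' power_mult_distrib)

lemma frob_dvd:
  assumes "prime p" "CHAR('a::field) = p" "(f :: 'a poly) dvd g"
  shows "frob p i f dvd frob p i g"
  using assms(3) by (auto simp: frob_mult[OF assms(1,2)] elim!: dvdE)

lemma minus_one_power_char:
  assumes "prime p" "CHAR('a::field) = p"
  shows "(-1 :: 'a) ^ (p ^ i) = -1"
proof -
  have "(1 + -1 :: 'a) ^ (p ^ i) = 1 ^ (p ^ i) + (-1) ^ (p ^ i)"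
    using assms by (intro freshmans_dream') simp_all
  moreover have "(0 :: 'a) ^ (p ^ i) = 0"
    using assms(1) by (simp add: prime_gt_0_nat)
  ultimately show ?thesis
    by (simp add: eq_neg_iff_add_eq_0 add.commute)
qed

lemma coeff_neg_var: "coeff (neg_var f) i = (-1) ^ i * coeff f i"
  unfolding neg_var_def
proof (induction f arbitrary: i)
  case (pCons a f)
  then show ?case
    by (cases i) (simp_all add: pcompose_pCons coeff_pCons)
qed simp

lemma frob_neg_var:
  assumes "prime p" "CHAR('a::field) = p"
  shows "frob p i (neg_var f :: 'a poly) = neg_var (frob p i f)"
proof (rule poly_eqI)
  fix j
  have "((-1 :: 'a) ^ j) ^ (p ^ i) = ((-1) ^ (p ^ i)) ^ j"
    by (simp flip: power_mult add: mult.commute)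
  then show "coeff (frob p i (neg_var f)) j = coeff (neg_var (frob p i f)) j"
    using assms by (simp add: coeff_frob prime_gt_0_nat coeff_neg_var power_mult_distrib
        minus_one_power_char)
qed

lemma of_nat_power_char:
  assumes "prime p" "CHAR('a::field) = p"
  shows "(of_nat j :: 'a) ^ (p ^ i) = of_nat j"
proof (induction j)
  case (Suc j)
  have "(of_nat j + 1 :: 'a) ^ (p ^ i) = of_nat j ^ (p ^ i) + 1 ^ (p ^ i)"
    using assms by (intro freshmans_dream') simp_all
  with Suc show ?case
    by (simp add: add.commute)
qed (use assms(1) in \<open>simp add: prime_gt_0_nat\<close>)

lemma frob_poly_over_Fp:
  assumes "prime p" "CHAR('a::field) = p" "poly_over_Fp (f :: 'a poly)"
  shows "frob p i f = f"
proof (rule poly_eqI)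
  fix j
  obtain l where "coeff f j = of_nat l"
    using assms(3) unfolding poly_over_Fp_def Fp_def by blast
  with assms(1,2) show "coeff (frob p i f) j = coeff f j"
    by (simp add: coeff_frob prime_gt_0_nat of_nat_power_char)
qed

lemma mem_Fp_if_power_char_eq:
  assumes "prime p" "CHAR('a::field) = p" "(x :: 'a) ^ p = x"
  shows "x \<in> Fp"
proof -
  define P :: "'a poly" where "P = monom 1 p - [:0, 1:]"
  have p2: "p \<ge> 2"
    using assms(1) prime_ge_2_nat by blast
  have root_iff: "poly P y = 0 \<longleftrightarrow> y ^ p = y" for y
    by (simp add: P_def poly_monom)
  have "coeff P p = 1"
    using p2 by (simp add: P_def coeff_pCons split: nat.split)
  then have "P \<noteq> 0"
    by auto
  have "degree P \<le> p"
    unfolding P_def using p2 by (intro degree_diff_le) (auto simp: degree_monom_le)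
  then have card_roots: "card {y. poly P y = 0} \<le> p"
    using card_poly_roots_bound[OF \<open>P \<noteq> 0\<close>] by linarith
  have "inj_on (of_nat :: nat \<Rightarrow> 'a) {..<p}"
    using assms(2) by (intro inj_onI) (auto simp: of_nat_eq_iff_cong_CHAR cong_less_modulus_unique_nat)
  then have "card (of_nat ` {..<p} :: 'a set) = p"
    by (simp add: card_image)
  moreover have "of_nat ` {..<p} \<subseteq> {y :: 'a. poly P y = 0}"
    using of_nat_power_char[OF assms(1,2), of _ 1] root_iff by auto
  ultimately have "of_nat ` {..<p} = {y. poly P y = 0}"
    using card_roots poly_roots_finite[OF \<open>P \<noteq> 0\<close>]
    by (metis card_seteq)
  with assms(3) root_iff show ?thesis
    unfolding Fp_def by blast
qed

lemma power_card_eq: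
  fixes x :: "'a::{field,finite}"
  shows "x ^ CARD('a) = x"
proof (cases "x = 0")
  case False
  have "(\<Prod>y\<in>UNIV - {0}. x * y) = (\<Prod>y\<in>UNIV - {0}. y)"
    by (rule prod.reindex_bij_witness[of _ "\<lambda>y. y / x" "\<lambda>y. x * y"]) (use False in auto)
  moreover have "(\<Prod>y\<in>UNIV - {0}. x * y) = x ^ (CARD('a) - 1) * (\<Prod>y\<in>UNIV - {0}. y)"
    by (simp add: prod.distrib)
  ultimately have "x ^ (CARD('a) - 1) = 1"
    by simp
  moreover have "CARD('a) = Suc (CARD('a) - 1)"
    using finite_UNIV_card_ge_0[where ?'a = 'a] by simp
  ultimately show ?thesis
    by (metis mult.right_neutral power_Suc)
qed simp

lemma power_card_power_eq:
  fixes x :: "'a::{field,finite}"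
  assumes "CARD('a) = p ^ k"
  shows "x ^ (p ^ (k * j)) = x"
proof (induction j)
  case (Suc j)
  have "x ^ (p ^ (k * Suc j)) = (x ^ (p ^ (k * j))) ^ CARD('a)"
    by (simp add: assms power_add mult.commute flip: power_mult)
  with Suc show ?case
    by (simp add: power_card_eq)
qed simp

lemma frob_period:
  assumes "p > 0" "CARD('a::{field,finite}) = p ^ k"
  shows "frob p (k * j) f = (f :: 'a poly)"
  using assms by (intro poly_eqI) (simp add: coeff_frob power_card_power_eq)

lemma frob_inverse:
  assumes "p > 0" "\<And>f :: 'a::field poly. frob p k f = f" "i \<le> k"
  shows "frob p (k - i) (frob p i f) = (f :: 'a poly)"
  using assms(1,3) by (simp add: frob_frob assms(2))

lemma frob_is_unit:
  assumes "prime p" "CHAR('a::field) = p" "is_unit (u :: 'a poly)"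
  shows "is_unit (frob p i u)"
proof -
  obtain w where "1 = u * w"
    using assms(3) by (rule dvdE)
  then have "1 = frob p i u * frob p i w"
    by (metis frob_one frob_mult[OF assms(1,2)])
  then show ?thesis
    by (rule dvdI)
qed

lemma irreducible_frob:
  assumes "prime p" "CHAR('a::field) = p" "\<And>f :: 'a poly. frob p k f = f" "i \<le> k"
    and "irreducible (r :: 'a poly)"
  shows "irreducible (frob p i r)"
proof (rule irreducibleI)
  have p: "p > 0"
    using assms(1) by (simp add: prime_gt_0_nat)
  note inv = frob_inverse[OF p assms(3)]
  show "frob p i r \<noteq> 0"
    using inv[OF assms(4), of r] assms(5) by (auto simp: frob_def)
  show "\<not> is_unit (frob p i r)"
    using frob_is_unit[OF assms(1,2), of "frob p i r" "k - i"] inv[OF assms(4), of r] assms(5)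
    by (auto simp: irreducible_def)
  fix a b assume "frob p i r = a * b"
  then have "r = frob p (k - i) a * frob p (k - i) b"
    using inv[OF assms(4), of r] by (metis frob_mult[OF assms(1,2)])
  then have "is_unit (frob p (k - i) a) \<or> is_unit (frob p (k - i) b)"
    by (rule irreducibleD[OF assms(5)])
  moreover have "frob p i (frob p (k - i) f) = f" for f :: "'a poly"
    using assms(3,4) p by (simp add: frob_frob)
  ultimately show "is_unit a \<or> is_unit b"
    using frob_is_unit[OF assms(1,2), of _ i] by metis
qed

lemma coprime_frob:
  assumes "prime p" "CHAR('a::field) = p" "coprime (f :: 'a poly) g"
  shows "coprime (frob p i f) (frob p i g)"
proof -
  obtain s t where "s * f + t * g = 1"
    using assms(3) by (rule coprime_imp_bezout)
  then have "frob p i s * frob p i f + frob p i t * frob p i g = 1"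
    by (metis frob_one frob_add[OF assms(1,2)] frob_mult[OF assms(1,2)])
  then show ?thesis
    by (rule bezout_imp_coprime)
qed

lemma power_char_poly:
  assumes "prime p" "CHAR('a::field) = p"
  shows "(f :: 'a poly) ^ (p ^ j) = pcompose (frob p j f) (monom 1 (p ^ j))"
proof (induction f)
  case (pCons a f)
  have "pCons a f = [:a:] + monom 1 1 * f"
    by (simp add: monom_Suc)
  then have "(pCons a f) ^ (p ^ j) = [:a:] ^ (p ^ j) + (monom 1 1 * f) ^ (p ^ j)"
    using assms by (simp add: freshmans_dream')
  also have "\<dots> = [:a ^ (p ^ j):] + monom 1 (p ^ j) * pcompose (frob p j f) (monom 1 (p ^ j))"
    by (simp add: poly_const_pow power_mult_distrib monom_power pCons.IH)
  also have "\<dots> = pcompose (frob p j (pCons a f)) (monom 1 (p ^ j))"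
    using assms(1) by (simp add: frob_def prime_gt_0_nat map_poly_pCons pcompose_pCons)
  finally show ?case .
qed (use assms(1) in \<open>simp add: frob_def prime_gt_0_nat\<close>)

section \<open>The modulus X^n + 1\<close>

lemma prime_not_dvd_if_dvd_power_plus_one:
  fixes p e n :: nat
  assumes "prime p" "e > 0" "n dvd p ^ e + 1"
  shows "\<not> p dvd n"
proof
  assume "p dvd n"
  then have "p dvd p ^ e + 1"
    using assms(3) by (rule dvd_trans)
  moreover have "p dvd p ^ e"
    using assms(2) by simp
  ultimately have "p dvd (p ^ e + 1) - p ^ e"
    by (rule dvd_diff_nat)
  with assms(1) show False
    by simp
qed

lemma degree_Xn1: "n > 0 \<Longrightarrow> degree (Xn1 n :: 'a::field poly) = n"
  unfolding Xn1_def by (subst degree_add_eq_left) (auto simp: degree_monom_eq)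

lemma Xn1_neq_0: "n > 0 \<Longrightarrow> Xn1 n \<noteq> (0 :: 'a::field poly)"
  by (metis degree_0 degree_Xn1 less_irrefl)

lemma Xn1_eq_X_power: "Xn1 n = [:0, 1:] ^ n + (1 :: 'a::field poly)"
  by (simp add: Xn1_def monom_altdef)

lemma poly_over_Fp_Xn1: "poly_over_Fp (Xn1 n :: 'a::field poly)"
  unfolding poly_over_Fp_def Fp_def Xn1_def coeff_add coeff_monom
  by (auto intro: range_eqI[of _ _ 0] range_eqI[of _ _ 1] range_eqI[of _ _ 2])

lemma squarefree_Xn1:
  assumes "n > 0" "of_nat n \<noteq> (0 :: 'a::field)"
  shows "squarefree (Xn1 n :: 'a poly)"
proof (rule squarefreeI)
  fix x :: "'a poly"
  assume "x ^ 2 dvd Xn1 n"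
  then obtain s where "Xn1 n = x ^ 2 * s"
    by (rule dvdE)
  then have s: "Xn1 n = x * (x * s)"
    by (simp add: power2_eq_square mult.assoc)
  have "pderiv (Xn1 n) = x * (pderiv (x * s) + s * pderiv x)"
    unfolding s by (simp add: pderiv_mult algebra_simps)
  then have "x dvd smult (of_nat n) (Xn1 n) - [:0, 1:] * pderiv (Xn1 n)"
    using s by (metis dvd_diff dvd_smult dvd_triv_left dvd_mult)
  moreover have "smult (of_nat n) (Xn1 n) - [:0, 1:] * pderiv (Xn1 n) = [:of_nat n :: 'a:]"
  proof -
    have "pderiv (Xn1 n :: 'a poly) = monom (of_nat n) (n - 1)"
      unfolding Xn1_def by (simp only: pderiv_add pderiv_monom) simp
    moreover have "[:0, 1:] * monom (of_nat n) (n - 1) = (monom (of_nat n) n :: 'a poly)"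
      using assms(1) by (cases n) (simp_all add: monom_Suc)
    ultimately show ?thesis
      by (simp add: Xn1_def smult_add_right smult_monom)
  qed
  ultimately have "x dvd [:of_nat n:]"
    by simp
  moreover have "is_unit [:of_nat n :: 'a:]"
    using assms(2) by (simp add: is_unit_const_poly_iff dvd_field_iff)
  ultimately show "is_unit x"
    by (rule dvd_unit_imp_unit)
qed

lemma eq_if_dvd_diff_degree_less:
  fixes a b M :: "'a::field poly"
  assumes "M dvd a - b" "degree a < degree M" "degree b < degree M"
  shows "a = b"
proof (rule ccontr)
  assume "a \<noteq> b"
  with assms(1) have "degree M \<le> degree (a - b)"
    by (intro dvd_imp_degree_le) auto
  moreover have "degree (a - b) < degree M"
    using degree_diff_le_max[of a b] assms(2,3) by simp
  ultimately show False
    by simp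
qed

lemma poly_over_Fp_mod_if_frob_cong:
  assumes p: "prime p" "CHAR('a::field) = p"
    and "M \<noteq> 0" "frob p 1 M = M" "M dvd frob p 1 a - (a :: 'a poly)"
  shows "poly_over_Fp (a mod M)"
proof -
  define r where "r = a mod M"
  have "degree (frob p 1 r) < degree M \<or> frob p 1 r = 0"
  proof (cases "r = 0")
    case False
    then have "degree r < degree M"
      using degree_mod_less'[OF \<open>M \<noteq> 0\<close>] by (simp add: r_def)
    then show ?thesis
      using map_poly_degree_leq[of _ r] unfolding frob_def by (meson le_less_trans)
  qed (simp add: frob_def)
  then have "frob p 1 r mod M = frob p 1 r"
    by (auto intro: mod_poly_less)
  moreover have "frob p 1 a = frob p 1 (a div M) * M + frob p 1 r"
    using p \<open>frob p 1 M = M\<close> by (metis div_mult_mod_eq frob_add frob_mult r_def)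
  ultimately have "frob p 1 a mod M = frob p 1 r"
    by (simp add: poly_mod_add_left)
  moreover have "frob p 1 a mod M = r"
    using assms(5) by (simp add: r_def mod_eq_dvd_iff)
  ultimately have "frob p 1 r = r"
    by simp
  then have "coeff r i ^ p = coeff r i" for i
    using p(1) by (metis coeff_frob power_one_right prime_gt_0_nat)
  then show ?thesis
    unfolding poly_over_Fp_def r_def[symmetric] using p by (blast intro: mem_Fp_if_power_char_eq)
qed

lemma Xn1_dvd_X_mult_inverse:
  assumes "n > 0"
  shows "Xn1 n dvd [:0, 1:] * [:0, 1:] ^ (2 * n - 1) - (1 :: 'a::field poly)"
proof -
  have "[:0, 1:] * [:0, 1:] ^ (2 * n - 1) = ([:0, 1:] ^ (n + n) :: 'a poly)"
    using assms by (simp add: mult_2 flip: power_Suc)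
  then have "[:0, 1:] * [:0, 1:] ^ (2 * n - 1) - (1 :: 'a poly) = ([:0, 1:] ^ n - 1) * Xn1 n"
    by (simp add: Xn1_eq_X_power algebra_simps power_add)
  then show ?thesis
    by simp
qed

lemma Xn1_dvd_inverse_add_monom:
  assumes "n > 0" "n dvd Q + 1" "odd ((Q + 1) div n)"
  shows "Xn1 n dvd [:0, 1:] ^ (2 * n - 1) + (monom 1 Q :: 'a::field poly)"
proof -
  let ?X = "[:0, 1:] :: 'a poly"
  have "?X ^ n - (-1) dvd (?X ^ n) ^ ((Q + 1) div n) - (-1) ^ ((Q + 1) div n)"
    by (rule diff_dvd_power_diff)
  then have minus_one: "Xn1 n dvd ?X ^ (Q + 1) + 1"
    using assms(2,3) by (simp add: Xn1_eq_X_power flip: power_mult)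
  have inv: "Xn1 n dvd ?X * ?X ^ (2 * n - 1) - 1"
    using assms(1) by (rule Xn1_dvd_X_mult_inverse)
  define W where "W = ?X ^ (2 * n - 1) + ?X ^ Q"
  have "Xn1 n dvd (?X * ?X ^ (2 * n - 1) - 1) + (?X ^ (Q + 1) + 1)"
    by (rule dvd_add[OF inv minus_one])
  also have "(?X * ?X ^ (2 * n - 1) - 1) + (?X ^ (Q + 1) + 1) = ?X * W"
    by (simp add: W_def algebra_simps)
  finally have "Xn1 n dvd ?X ^ (2 * n - 1) * (?X * W)"
    by (rule dvd_mult)
  from dvd_diff[OF this dvd_mult[OF inv, of W]] show ?thesis
    by (simp add: W_def algebra_simps monom_altdef)
qed

lemma dvd_pcompose_diff:
  fixes f Y Z :: "'a::comm_ring_1 poly"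
  assumes "m dvd Y - Z"
  shows "m dvd pcompose f Y - pcompose f Z"
proof (induction f)
  case (pCons a f)
  have "pcompose (pCons a f) Y - pcompose (pCons a f) Z =
      Y * (pcompose f Y - pcompose f Z) + (Y - Z) * pcompose f Z"
    by (simp add: pcompose_pCons algebra_simps)
  also have "m dvd \<dots>"
    using pCons.IH assms by (intro dvd_add dvd_mult dvd_mult2)
  finally show ?case .
qed simp

lemma Xn1_dvd_pcompose_inverse:
  assumes "prime p" "CHAR('a::field) = p" "n > 0" "n dvd p ^ j + 1" "odd ((p ^ j + 1) div n)"
    and "frob p j f = (f :: 'a poly)"
  shows "Xn1 n dvd pcompose f ([:0, 1:] ^ (2 * n - 1)) - neg_var f ^ (p ^ j)"
proof -
  have "neg_var f ^ (p ^ j) = pcompose (neg_var f) (monom 1 (p ^ j))"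
    using assms(1,2,6) by (simp add: power_char_poly frob_neg_var)
  also have "\<dots> = pcompose f (pcompose [:0, -1:] (monom 1 (p ^ j)))"
    by (simp add: neg_var_def pcompose_assoc)
  also have "pcompose [:0, -1:] (monom 1 (p ^ j)) = (- monom 1 (p ^ j) :: 'a poly)"
    by (simp add: pcompose_pCons)
  finally have "neg_var f ^ (p ^ j) = pcompose f (- monom 1 (p ^ j))" .
  moreover have "Xn1 n dvd [:0, 1:] ^ (2 * n - 1) - (- monom 1 (p ^ j))"
    using Xn1_dvd_inverse_add_monom[OF assms(3-5)] by simp
  ultimately show ?thesis
    using dvd_pcompose_diff by metis
qed

lemma dvd_neg_var_power_diff:
  fixes H a :: "'a::field poly"
  assumes "neg_var H = H" "H dvd a - [:c:]" "c ^ q = c"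
  shows "H dvd a - neg_var a ^ q"
proof -
  have "neg_var H dvd neg_var (a - [:c:])"
    using assms(2) unfolding neg_var_def by (auto simp: pcompose_mult elim!: dvdE)
  then have "H dvd neg_var a - [:c:]"
    using assms(1) by (simp add: neg_var_def pcompose_diff)
  moreover have "neg_var a - [:c:] dvd neg_var a ^ q - [:c:] ^ q"
    by (rule diff_dvd_power_diff)
  ultimately have "H dvd neg_var a ^ q - [:c:]"
    using assms(3) by (simp add: poly_const_pow dvd_trans)
  from dvd_diff[OF assms(2) this] show ?thesis
    by simp
qed

section \<open>Coefficient pairing and isotropy\<close>

definition coeff_pairing :: "nat \<Rightarrow> 'a::field poly \<Rightarrow> 'a poly \<Rightarrow> 'a" where
  "coeff_pairing n f g = (\<Sum>j<n. coeff (f mod Xn1 n) j * coeff (g mod Xn1 n) j)"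

lemma coeff_mod_Xn1_eq_0:
  assumes "n > 0" "n \<le> i"
  shows "coeff (f mod Xn1 n :: 'a::field poly) i = 0"
proof -
  have "f mod Xn1 n = 0 \<or> degree (f mod Xn1 n) < n"
    using degree_mod_less[OF Xn1_neq_0[OF assms(1)], of f] by (simp add: degree_Xn1 assms(1))
  with assms(2) show ?thesis
    by (auto intro: coeff_eq_0)
qed

lemma coeff_X_mult_mod_Xn1:
  assumes "n > 0" "j < n"
  shows "coeff (pCons 0 f mod Xn1 n :: 'a::field poly) j =
    (if j = 0 then - coeff (f mod Xn1 n) (n - 1) else coeff (f mod Xn1 n) (j - 1))"
proof -
  define r where "r = f mod Xn1 n"
  define c where "c = coeff r (n - 1)"
  define w where "w = [:0, 1:] * r - smult c (Xn1 n)"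
  have coeff_Xn1: "coeff (Xn1 n :: 'a poly) i = (if i = n then 1 else 0) + (if i = 0 then 1 else 0)" for i
    by (simp add: Xn1_def coeff_monom)
  have coeff_w: "coeff w i = (if i = 0 then 0 else coeff r (i - 1)) - c * coeff (Xn1 n) i" for i
    unfolding w_def by (cases i) simp_all
  have "degree w \<le> n - 1"
  proof (rule degree_le, intro allI impI)
    fix i assume "n - 1 < i"
    then show "coeff w i = 0"
      using assms(1) coeff_mod_Xn1_eq_0[OF assms(1), of "i - 1" f]
      by (cases "i = n") (auto simp: coeff_w coeff_Xn1 c_def r_def)
  qed
  then have "degree w < degree (Xn1 n :: 'a poly)"
    using assms(1) by (simp add: degree_Xn1)
  have "pCons 0 f mod Xn1 n = ([:0, 1:] * f) mod Xn1 n"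
    by simp
  also have "\<dots> = ([:0, 1:] * r) mod Xn1 n"
    unfolding r_def by (rule mod_mult_right_eq[symmetric])
  also have "[:0, 1:] * r = w + smult c (Xn1 n)"
    by (simp add: w_def)
  also have "(w + smult c (Xn1 n)) mod Xn1 n = w"
    using \<open>degree w < _\<close> by (simp add: poly_mod_add_left mod_smult_left mod_poly_less)
  finally have "pCons 0 f mod Xn1 n = w" .
  then show ?thesis
    using assms by (simp add: coeff_w coeff_Xn1 c_def r_def)
qed

lemma coeff_pairing_X_mult:
  assumes "n > 0"
  shows "coeff_pairing n ([:0, 1:] * f) ([:0, 1:] * g) = coeff_pairing n f (g :: 'a::field poly)"
proof -
  obtain m where n: "n = Suc m"
    using assms by (cases n) auto
  have "coeff_pairing n ([:0, 1:] * f) ([:0, 1:] * g) =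
      coeff (([:0, 1:] * f) mod Xn1 n) 0 * coeff (([:0, 1:] * g) mod Xn1 n) 0 +
      (\<Sum>j<m. coeff (([:0, 1:] * f) mod Xn1 n) (Suc j) * coeff (([:0, 1:] * g) mod Xn1 n) (Suc j))"
    unfolding coeff_pairing_def n by (rule sum.lessThan_Suc_shift)
  also have "\<dots> = coeff (f mod Xn1 n) m * coeff (g mod Xn1 n) m +
      (\<Sum>j<m. coeff (f mod Xn1 n) j * coeff (g mod Xn1 n) j)"
    using assms by (simp add: coeff_X_mult_mod_Xn1 n)
  also have "\<dots> = coeff_pairing n f g"
    by (simp add: coeff_pairing_def n)
  finally show ?thesis .
qed

lemma coeff_pairing_cong_right: "Xn1 n dvd g - g' \<Longrightarrow> coeff_pairing n f g = coeff_pairing n f g'"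
  unfolding coeff_pairing_def by (simp flip: mod_eq_dvd_iff)

lemma coeff_pairing_commute: "coeff_pairing n f g = coeff_pairing n g f"
  unfolding coeff_pairing_def by (simp add: mult.commute)

lemma coeff_pairing_add_left:
  "coeff_pairing n (f + f') g = coeff_pairing n f g + coeff_pairing n f' (g :: 'a::field poly)"
  unfolding coeff_pairing_def by (simp add: poly_mod_add_left algebra_simps sum.distrib)

lemma coeff_pairing_smult_left:
  "coeff_pairing n (smult c f) g = c * coeff_pairing n f (g :: 'a::field poly)"
  unfolding coeff_pairing_def by (simp add: mod_smult_left algebra_simps sum_distrib_left)

lemma coeff_pairing_add_right:
  "coeff_pairing n f (g + g') = coeff_pairing n f g + coeff_pairing n f (g' :: 'a::field poly)"
  by (simp add: coeff_pairing_commute[of n f] coeff_pairing_add_left)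

lemma coeff_pairing_smult_right:
  "coeff_pairing n f (smult c g) = c * coeff_pairing n f (g :: 'a::field poly)"
  by (simp add: coeff_pairing_commute[of n f] coeff_pairing_smult_left)

lemma coeff_pairing_mult_left:
  assumes "n > 0"
  shows "coeff_pairing n (f * g) h =
    coeff_pairing n g (pcompose f ([:0, 1:] ^ (2 * n - 1)) * (h :: 'a::field poly))"
proof (induction f arbitrary: g h)
  case 0
  then show ?case
    by (simp add: coeff_pairing_def)
next
  case (pCons a f)
  let ?Y = "[:0, 1:] ^ (2 * n - 1) :: 'a poly"
  have "Xn1 n dvd [:0, 1:] * (?Y * h) - h"
    using dvd_mult2[OF Xn1_dvd_X_mult_inverse[OF assms], of h] by (simp add: algebra_simps)
  then have "coeff_pairing n ([:0, 1:] * (f * g)) h =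
      coeff_pairing n ([:0, 1:] * (f * g)) ([:0, 1:] * (?Y * h))"
    by (intro coeff_pairing_cong_right) (simp add: dvd_diff_commute)
  also have "\<dots> = coeff_pairing n g (pcompose f ?Y * (?Y * h))"
    unfolding coeff_pairing_X_mult[OF assms] by (rule pCons.IH)
  finally show ?case
    by (simp add: pcompose_pCons coeff_pairing_add_left coeff_pairing_add_right
        coeff_pairing_smult_left coeff_pairing_smult_right algebra_simps)
qed

lemma totally_isotropic_neg_subspaceI:
  fixes n :: nat and g a :: "'a::field poly"
  defines "Y \<equiv> [:0, 1:] ^ (2 * n - 1)"
  assumes n: "n > 0" and cong: "Xn1 n dvd g * pcompose g Y * (a - pcompose a Y)"
  shows "totally_isotropic n (neg_subspace n g a)"
  unfolding totally_isotropic_def neg_subspace_def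
proof (intro ballI)
  fix x y
  assume "x \<in> {(vecR n (u * g), vecR n (u * a * g)) | u. poly_over_Fp u}"
    and "y \<in> {(vecR n (u * g), vecR n (u * a * g)) | u. poly_over_Fp u}"
  then obtain u v where xy: "x = (vecR n (u * g), vecR n (u * a * g))"
    "y = (vecR n (v * g), vecR n (v * a * g))"
    by blast
  have "symp n x y = coeff_pairing n (g * u) (v * a * g) - coeff_pairing n ((a * g) * u) (v * g)"
    unfolding xy symp_def vecR_def coeff_pairing_def by (simp add: mult_ac)
  also have "coeff_pairing n (g * u) (v * a * g) = coeff_pairing n u (pcompose g Y * (v * a * g))"
    unfolding Y_def by (rule coeff_pairing_mult_left[OF n])
  also have "coeff_pairing n ((a * g) * u) (v * g) =
      coeff_pairing n u (pcompose a Y * pcompose g Y * (v * g))"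
    unfolding Y_def by (simp add: coeff_pairing_mult_left[OF n] pcompose_mult)
  also have "coeff_pairing n u (pcompose g Y * (v * a * g)) =
      coeff_pairing n u (pcompose a Y * pcompose g Y * (v * g))"
  proof (rule coeff_pairing_cong_right)
    have "pcompose g Y * (v * a * g) - pcompose a Y * pcompose g Y * (v * g) =
        v * (g * pcompose g Y * (a - pcompose a Y))"
      by (simp add: algebra_simps)
    then show "Xn1 n dvd pcompose g Y * (v * a * g) - pcompose a Y * pcompose g Y * (v * g)"
      using cong by simp
  qed
  finally show "symp n x y = 0"
    by simp
qed

lemma totally_isotropic_neg_subspace_if_power_cong:
  fixes g a :: "'a::field poly"
  assumes p: "prime p" "CHAR('a) = p" and "n > 0" "n dvd p ^ j + 1" "odd ((p ^ j + 1) div n)"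
    and period: "\<And>f :: 'a poly. frob p j f = f" and "neg_var g = g"
    and cong: "Xn1 n dvd g * g ^ (p ^ j) * (a - neg_var a ^ (p ^ j))"
  shows "totally_isotropic n (neg_subspace n g a)"
proof (rule totally_isotropic_neg_subspaceI[OF \<open>n > 0\<close>])
  let ?Y = "[:0, 1:] ^ (2 * n - 1) :: 'a poly"
  let ?a = "neg_var a ^ (p ^ j)"
  note inverse = Xn1_dvd_pcompose_inverse[OF p assms(3-5) period]
  have g: "Xn1 n dvd pcompose g ?Y - g ^ (p ^ j)"
    using inverse[of g] \<open>neg_var g = g\<close> by simp
  have "g * pcompose g ?Y * (a - pcompose a ?Y) = g * g ^ (p ^ j) * (a - ?a) +
      (g * (a - pcompose a ?Y)) * (pcompose g ?Y - g ^ (p ^ j)) -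
      (g * g ^ (p ^ j)) * (pcompose a ?Y - ?a)"
    by (simp add: algebra_simps)
  also have "Xn1 n dvd \<dots>"
    by (rule dvd_diff[OF dvd_add[OF cong dvd_mult[OF g]] dvd_mult[OF inverse[of a]]])
  finally show "Xn1 n dvd g * pcompose g ?Y * (a - pcompose a ?Y)" .
qed

section \<open>Frobenius conjugates of a factor\<close>

text \<open>
  Hypothesis (2) of the theorem, with X^n + 1 replaced by any squarefree M defined over F_p:
  if r divides \<sigma>^i(h), then \<sigma>^{k-i}(r) divides h, so h_conj says that every irreducible
  factor of M/g divides exactly one of the conjugates \<sigma>^i(h), i < k.
\<close>

locale conjugate_factors =
  fixes p k :: nat and M g h :: "'a::field poly"
  assumes prime: "prime p" and char: "CHAR('a) = p"
    and period: "\<And>f :: 'a poly. frob p k f = f" and k_pos: "k > 0"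
    and squarefree_M: "squarefree M" and frob_M: "\<And>i. frob p i M = M"
    and g_dvd: "g dvd M" and frob_g: "\<And>i. frob p i g = g" and coprime_gh: "coprime g h"
    and h_dvd: "h dvd M div g"
    and h_conj: "\<And>r. irreducible r \<Longrightarrow> r dvd M div g \<Longrightarrow>
      (r dvd h \<longleftrightarrow> \<not> (\<exists>i\<in>{1..<k}. frob p i r dvd h))"
begin

lemma p_pos: "p > 0"
  using prime by (simp add: prime_gt_0_nat)

lemma M_neq_0: "M \<noteq> 0"
  using squarefree_M by auto

lemma h_neq_0: "h \<noteq> 0"
  using M_neq_0 g_dvd h_dvd by auto

lemma frob_h_dvd_M: "frob p i h dvd M"
proof -
  have "h dvd M"
    using h_dvd g_dvd by (metis dvd_div_mult_self dvd_mult2)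
  then show ?thesis
    using frob_dvd[OF prime char] frob_M by metis
qed

lemma dvd_if_dvd_conjugates:
  assumes "g dvd F" "\<And>i. i < k \<Longrightarrow> frob p i h dvd F"
  shows "M dvd F"
proof (rule squarefree_dvdI[OF squarefree_M])
  fix r assume r: "irreducible r" "r dvd M"
  show "r dvd F"
  proof (cases "r dvd g")
    case True
    from this assms(1) show ?thesis
      by (rule dvd_trans)
  next
    case False
    moreover have "r dvd g * (M div g)"
      using r(2) g_dvd by simp
    ultimately have "r dvd M div g"
      using irreducible_dvd_multD[OF r(1)] by blast
    show ?thesis
    proof (cases "r dvd h")
      case True
      with assms(2)[of 0] k_pos show ?thesis
        by (auto intro: dvd_trans)
    next
      case False
      then obtain i where i: "i \<in> {1..<k}" "frob p i r dvd h"
        using h_conj[OF r(1) \<open>r dvd M div g\<close>] by blast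
      then have "frob p (k - i) (frob p i r) dvd frob p (k - i) h"
        using prime char by (intro frob_dvd)
      then have "r dvd frob p (k - i) h"
        using i(1) by (simp add: frob_inverse[OF p_pos period])
      with assms(2)[of "k - i"] i(1) show ?thesis
        by (auto intro: dvd_trans)
    qed
  qed
qed

lemma coprime_conjugates:
  assumes "i < j" "j < k"
  shows "coprime (frob p i h) (frob p j h)"
proof (rule coprimeI, rule ccontr)
  fix d assume d: "d dvd frob p i h" "d dvd frob p j h" "\<not> is_unit d"
  note inv = frob_inverse[OF p_pos period]
  have "frob p i h \<noteq> 0"
    using inv[of i h] h_neq_0 assms by (auto simp: frob_def)
  with d obtain r where r: "irreducible r" "r dvd d"
    using irreducible_divisor_exists by (metis dvd_0_left)
  define r' where "r' = frob p (k - i) r"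
  have "irreducible r'"
    unfolding r'_def by (rule irreducible_frob[OF prime char period _ r(1)]) simp
  have "r' dvd frob p (k - i) (frob p i h)"
    unfolding r'_def using prime char dvd_trans[OF r(2) d(1)] by (rule frob_dvd)
  then have "r' dvd h"
    using inv[of i h] assms by simp
  have "r' dvd frob p (k - i) (frob p j h)"
    unfolding r'_def using prime char dvd_trans[OF r(2) d(2)] by (rule frob_dvd)
  also have "frob p (k - i) (frob p j h) = frob p (j - i) (frob p k h)"
    using p_pos assms by (simp add: frob_frob add.commute)
  finally have "frob p (k - (j - i)) r' dvd frob p (k - (j - i)) (frob p (j - i) h)"
    using prime char period by (intro frob_dvd) simp_all
  then have "frob p (k - (j - i)) r' dvd h"
    using inv[of "j - i" h] assms by simp
  moreover have "k - (j - i) \<in> {1..<k}"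
    using assms by auto
  moreover have "r' dvd M div g"
    using \<open>r' dvd h\<close> h_dvd by (rule dvd_trans)
  ultimately show False
    using h_conj[OF \<open>irreducible r'\<close>] \<open>r' dvd h\<close> by blast
qed

lemma crt_solution_exists:
  assumes "degree M > 0"
  obtains a where "degree a < degree M" "g dvd a - 1" "\<forall>i<k. frob p i h dvd a - [:c i:]"
proof -
  \<comment> \<open>the index k stands for the modulus g\<close>
  define m where "m j = (if j = k then g else frob p j h)" for j
  define r where "r j = (if j = k then 1 else [:c j:])" for j
  have "m j dvd M" for j
    using g_dvd frob_h_dvd_M by (simp add: m_def)
  have "coprime (m i) (m j)" if "i < j" "j \<le> k" for i j
    using coprime_frob[OF prime char coprime_gh, of i] coprime_conjugates[OF that(1)] that
    by (cases "j = k") (simp_all add: m_def frob_g coprime_commute)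
  then have "coprime (m i) (m j)" if "i \<le> k" "j \<le> k" "i \<noteq> j" for i j
    using that by (metis coprime_commute nat_neq_iff)
  then obtain x where x: "\<forall>j\<in>{..k}. m j dvd x - r j"
    using chinese_remainder_euclidean[of "{..k}" m r] by auto
  have sol: "m j dvd x mod M - r j" if "j \<le> k" for j
    using x that by (simp add: dvd_mod_diff[OF \<open>m j dvd M\<close>])
  show thesis
  proof (rule that)
    show "degree (x mod M) < degree M"
      using M_neq_0 assms degree_mod_less' by (cases "x mod M = 0") auto
    show "g dvd x mod M - 1"
      using sol[of k] by (simp add: m_def r_def)
    show "\<forall>i<k. frob p i h dvd x mod M - [:c i:]"
      using sol by (metis less_imp_le less_irrefl m_def r_def)
  qed
qed

lemma crt_solution_unique:
  assumes "degree a < degree M" "g dvd a - 1" "\<forall>i<k. frob p i h dvd a - [:c i:]"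
    and "degree b < degree M" "g dvd b - 1" "\<forall>i<k. frob p i h dvd b - [:c i:]"
  shows "a = b"
proof (rule eq_if_dvd_diff_degree_less[OF dvd_if_dvd_conjugates assms(1,4)])
  show "g dvd a - b"
    using dvd_diff[OF assms(2,5)] by simp
  show "frob p i h dvd a - b" if "i < k" for i
    using dvd_diff[of "frob p i h" "a - [:c i:]" "b - [:c i:]"] assms(3,6) that by simp
qed

lemma crt_solution_frob_cong:
  fixes c :: "nat \<Rightarrow> 'a"
  assumes c: "\<And>i. c (Suc i) = c i ^ p" "c k = c 0"
    and "g dvd a - 1" and cong: "\<forall>i<k. frob p i h dvd a - [:c i:]"
  shows "M dvd frob p 1 a - a"
proof (rule dvd_if_dvd_conjugates)
  have "g dvd frob p 1 a - 1"
    using frob_dvd[OF prime char \<open>g dvd a - 1\<close>, of 1] by (simp add: frob_diff[OF prime char] frob_g)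
  from dvd_diff[OF this \<open>g dvd a - 1\<close>] show "g dvd frob p 1 a - a"
    by simp
  fix i assume "i < k"
  obtain l where l: "l < k" "frob p (Suc l) h = frob p i h" "c (Suc l) = c i"
  proof (cases i)
    case 0
    with \<open>i < k\<close> c(2) period show thesis
      by (intro that[of "k - 1"]) simp_all
  next
    case (Suc l)
    with \<open>i < k\<close> show thesis
      by (intro that[of l]) simp_all
  qed
  have "frob p 1 (frob p l h) dvd frob p 1 (a - [:c l:])"
    using frob_dvd[OF prime char cong[rule_format, OF l(1)]] .
  with l c(1) have "frob p i h dvd frob p 1 a - [:c i:]"
    by (simp add: frob_frob frob_diff[OF prime char] frob_const p_pos)
  from dvd_diff[OF this cong[rule_format, OF \<open>i < k\<close>]] show "frob p i h dvd frob p 1 a - a"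
    by simp
qed

end

theorem mainTheorem10:
  fixes p k m n :: nat and eta alpha :: "'a::{field,finite}" and g h :: "'a poly"
  assumes "prime p" "odd p" "k > 0" "m > 0" "n > 0"
    and "n dvd p ^ (k * m) + 1" "odd ((p ^ (k * m) + 1) div n)"
    and "of_nat p = (0::'a)"
    and "CARD('a) = p ^ k"
    and "Fp_adjoin eta = UNIV"
    and "coprime g h"
    and g_fac: "poly_over_Fp g" "g dvd Xn1 n" "neg_var g = g"
    and g_irr: "\<And>r. irreducible_over_Fp r \<Longrightarrow> r dvd Xn1 n \<Longrightarrow> \<not> k dvd degree r \<Longrightarrow> r dvd g"
    and h_fac: "h dvd Xn1 n div g" "neg_var h = h"
    and h_irr: "\<And>r. irreducible r \<Longrightarrow> r dvd Xn1 n div g \<Longrightarrow>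
                  (r dvd h \<longleftrightarrow> \<not> (\<exists>i\<in>{1..<k}. frob p i r dvd h))"
    and "alpha \<in> Fp" "alpha \<noteq> 0"
  shows "(\<exists>!a. degree a < n \<and> g dvd a - 1 \<and>
            (\<forall>i<k. frob p i h dvd a - [:(alpha * eta) ^ (p ^ i):]))
       \<and> (\<forall>a. g dvd a - 1 \<and> (\<forall>i<k. frob p i h dvd a - [:(alpha * eta) ^ (p ^ i):])
              \<longrightarrow> poly_over_Fp (a mod Xn1 n) \<and> totally_isotropic n (neg_subspace n g a))"
proof -
  have p: "prime p" "CHAR('a) = p"
    using assms(1,8) by (auto intro: CHAR_eq_prime)
  have frob_multiple_k: "frob p (k * j) f = f" for j and f :: "'a poly"
    using prime_gt_0_nat[OF assms(1)] assms(9) by (rule frob_period)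
  have "\<not> p dvd n"
    using assms(3,4) by (intro prime_not_dvd_if_dvd_power_plus_one[OF assms(1) _ assms(6)]) simp
  with assms(5) p(2) have "squarefree (Xn1 n :: 'a poly)"
    by (intro squarefree_Xn1) (simp_all add: of_nat_eq_0_iff_char_dvd)
  then interpret conjugate_factors p k "Xn1 n" g h
    using p frob_multiple_k[of 1] assms(3,11) g_fac(2) h_fac(1) h_irr
    by unfold_locales (simp_all add: frob_poly_over_Fp[OF p g_fac(1)] frob_poly_over_Fp[OF p poly_over_Fp_Xn1])
  define c where "c i = (alpha * eta) ^ (p ^ i)" for i
  have c: "c (Suc i) = c i ^ p" "c k = c 0" "c i ^ (p ^ (k * m)) = c i" for i
    using power_card_power_eq[OF assms(9), of _ 1] power_card_power_eq[OF assms(9), of "c i" m]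
    by (simp_all add: c_def mult.commute flip: power_mult)
  have "\<exists>!a. degree a < n \<and> g dvd a - 1 \<and> (\<forall>i<k. frob p i h dvd a - [:c i:])"
    using crt_solution_exists[of c] crt_solution_unique[of _ c] assms(5) by (simp add: degree_Xn1) metis
  moreover have "poly_over_Fp (a mod Xn1 n) \<and> totally_isotropic n (neg_subspace n g a)"
    if a: "g dvd a - 1" "\<forall>i<k. frob p i h dvd a - [:c i:]" for a
  proof
    show "poly_over_Fp (a mod Xn1 n)"
      using p M_neq_0 frob_M crt_solution_frob_cong[OF c(1,2) a] by (rule poly_over_Fp_mod_if_frob_cong)
    have "frob p i h dvd a - neg_var a ^ (p ^ (k * m))" if "i < k" for i
      using dvd_neg_var_power_diff[OF _ a(2)[rule_format, OF that] c(3)] frob_neg_var[OF p, of i h]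
      by (simp add: h_fac(2))
    then have "Xn1 n dvd g * g ^ (p ^ (k * m)) * (a - neg_var a ^ (p ^ (k * m)))"
      by (intro dvd_if_dvd_conjugates) (simp_all add: mult.assoc)
    then show "totally_isotropic n (neg_subspace n g a)"
      by (rule totally_isotropic_neg_subspace_if_power_cong[OF p assms(5-7) frob_multiple_k g_fac(3)])
  qed
  ultimately show ?thesis
    unfolding c_def by blast
qed

end
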